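(* Let $I\subseteq \mathrm{Int}(\mathbb{Z})$ be a principal ideal with $I\cap\mathbb{Z}=n\mathbb{Z}$ for some integer $n\neq 0$. Then $I=n\,\mathrm{Int}(\mathbb{Z})$. In particular $n\,\mathrm{Int}(\mathbb{Z})\cap\mathbb{Z}=n\mathbb{Z}$ for every nonzero integer $n$. Moreover, for nonzero integers $n_1,n_2$ we have $n_1\mathrm{Int}(\mathbb{Z})=n_2\mathrm{Int}(\mathbb{Z})$ if and only if $n_1=\pm n_2$.
   Context: $\mathrm{Int}(\mathbb{Z})=\{f\in\mathbb{Q}[X] : f(\mathbb{Z})\subseteq\mathbb{Z}\}$ is the ring of integer-valued polynomials. An ideal $I$ of $\mathrm{Int}(\mathbb{Z})$ is called unitary if $I\cap\mathbb{Z}\neq\{0\}$. *)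

theory Defs
  imports "HOL-Computational_Algebra.Polynomial"
begin

definition IntZ :: "rat poly set" where
  "IntZ = {f. \<forall>z::int. poly f (of_int z) \<in> \<int>}"

definition pideal :: "rat poly \<Rightarrow> rat poly set" where
  "pideal f = {f * g | g. g \<in> IntZ}"

definition int_part :: "rat poly set \<Rightarrow> int set" where
  "int_part I = {k::int. [:of_int k:] \<in> I}"

end

theory Submission
  imports Defs
begin

text \<open>Degrees add under multiplication, so a factor f of a nonzero constant in f Int(Z) is
  itself constant, and being integer-valued it is an integer c. Evaluating at 0 shows
  c Int(Z) \<inter> Z = c Z, and c Z = n Z forces c = \<plusminus>n; finally c Int(Z) = (-c) Int(Z).\<close>

lemma const_in_IntZ_iff: "[:c:] \<in> IntZ \<longleftrightarrow> c \<in> \<int>"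
  unfolding IntZ_def by simp

lemma IntZ_uminus: "g \<in> IntZ \<Longrightarrow> - g \<in> IntZ"
  unfolding IntZ_def by auto

lemma IntZ_degree_0E:
  assumes "f \<in> IntZ" and "degree f = 0"
  obtains c where "f = [:of_int c:]"
proof -
  from \<open>degree f = 0\<close> obtain a where f: "f = [:a:]"
    by (elim degree_eq_zeroE)
  with \<open>f \<in> IntZ\<close> have "a \<in> \<int>"
    by (simp add: const_in_IntZ_iff)
  with f show ?thesis
    using that by (auto elim: Ints_cases)
qed

lemma pideal_uminus: "pideal (- f) = pideal f"
proof -
  have "- f * g = f * - g" for g
    by simp
  then show ?thesis
    unfolding pideal_def by (metis (no_types, opaque_lifting) IntZ_uminus minus_minus)
qed

lemma IntZ_factor_of_constE:
  assumes "f \<in> IntZ" and "[:c:] \<in> pideal f" and "c \<noteq> 0"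
  obtains k where "f = [:of_int k:]"
proof -
  from \<open>[:c:] \<in> pideal f\<close> obtain g where "[:c:] = f * g"
    unfolding pideal_def by auto
  with \<open>c \<noteq> 0\<close> have "f * g \<noteq> 0" and "degree (f * g) = 0"
    by (metis pCons_eq_0_iff, metis degree_pCons_0)
  then have "degree f = 0"
    by (auto simp: degree_mult_eq_0)
  with \<open>f \<in> IntZ\<close> show ?thesis
    using that by (elim IntZ_degree_0E)
qed

lemma multiples_eq_dvd_set: "{n * m | m. True} = {k. n dvd k}"
  by (auto simp: dvd_def)

lemma int_part_pideal_const: "int_part (pideal [:of_int n:]) = {k. n dvd k}"
proof (intro set_eqI iffI)
  fix k
  assume "k \<in> int_part (pideal [:of_int n:])"
  then obtain g where "g \<in> IntZ" and k: "[:of_int k:] = [:of_int n:] * g"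
    unfolding int_part_def pideal_def by auto
  from \<open>g \<in> IntZ\<close> have "poly g (of_int 0) \<in> \<int>"
    unfolding IntZ_def by blast
  then obtain m where "poly g 0 = of_int m"
    by (auto elim: Ints_cases)
  moreover have "of_int k = (of_int n :: rat) * poly g 0"
    using arg_cong[OF k, of "\<lambda>p. poly p 0"] by simp
  ultimately have "k = n * m"
    by (simp flip: of_int_mult)
  then show "k \<in> {k. n dvd k}"
    by simp
next
  fix k
  assume "k \<in> {k. n dvd k}"
  then obtain m where "k = n * m"
    by auto
  then have "[:of_int k:] = [:of_int n:] * [:(of_int m :: rat):]"
    by simp
  moreover have "[:(of_int m :: rat):] \<in> IntZ"
    by (simp add: const_in_IntZ_iff)
  ultimately show "k \<in> int_part (pideal [:of_int n:])"
    unfolding int_part_def pideal_def by blast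
qed

lemma int_dvd_sets_eq_iff: "{k. a dvd k} = {k. b dvd k} \<longleftrightarrow> a = b \<or> a = - b"
  for a b :: int
proof
  assume eq: "{k. a dvd k} = {k. b dvd k}"
  have "a dvd b" and "b dvd a"
    using eq[THEN equalityD2, THEN subsetD, of b] eq[THEN equalityD1, THEN subsetD, of a]
    by simp_all
  then have "\<bar>a\<bar> = \<bar>b\<bar>"
    by (rule zdvd_antisym_abs)
  then show "a = b \<or> a = - b"
    by linarith
qed auto

lemma pideal_const_eq_iff: "pideal [:of_int a:] = pideal [:of_int b:] \<longleftrightarrow> a = b \<or> a = - b"
proof
  assume "pideal [:of_int a:] = pideal [:of_int b:]"
  then have "int_part (pideal [:of_int a:]) = int_part (pideal [:of_int b:])"
    by (rule arg_cong)
  then have "{k. a dvd k} = {k. b dvd k}"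
    unfolding int_part_pideal_const .
  then show "a = b \<or> a = - b"
    by (rule int_dvd_sets_eq_iff[THEN iffD1])
next
  have "[:of_int (- b):] = (- [:of_int b:] :: rat poly)"
    by simp
  then have uminus: "pideal [:of_int (- b):] = pideal [:of_int b:]"
    by (simp only: pideal_uminus)
  show "a = b \<or> a = - b \<Longrightarrow> pideal [:of_int a:] = pideal [:of_int b:]"
    by (elim disjE) (simp_all only: uminus)
qed

lemma pideal_eq_const_if_int_part_eq:
  assumes "f \<in> IntZ" and "n \<noteq> 0" and int_part: "int_part (pideal f) = {k. n dvd k}"
  shows "pideal f = pideal [:of_int n:]"
proof -
  from int_part have "n \<in> int_part (pideal f)"
    by simp
  then have "[:of_int n:] \<in> pideal f"
    unfolding int_part_def by simp
  moreover from \<open>n \<noteq> 0\<close> have "(of_int n :: rat) \<noteq> 0"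
    by simp
  ultimately obtain c where f: "f = [:of_int c:]"
    using \<open>f \<in> IntZ\<close> by (elim IntZ_factor_of_constE)
  with int_part have "{k. c dvd k} = {k. n dvd k}"
    by (simp add: int_part_pideal_const)
  with f show ?thesis
    by (simp add: int_dvd_sets_eq_iff pideal_const_eq_iff)
qed

theorem mainTheorem1:
  shows "(\<forall>f (n::int). f \<in> IntZ \<and> n \<noteq> 0 \<and> int_part (pideal f) = {n * m | m. True}
            \<longrightarrow> pideal f = pideal [:of_int n:])
       \<and> (\<forall>n::int. n \<noteq> 0 \<longrightarrow> int_part (pideal [:of_int n:]) = {n * m | m. True})
       \<and> (\<forall>n1 n2 :: int. n1 \<noteq> 0 \<and> n2 \<noteq> 0 \<longrightarrow>
            (pideal [:of_int n1:] = pideal [:of_int n2:] \<longleftrightarrow> n1 = n2 \<or> n1 = - n2))"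
  unfolding multiples_eq_dvd_set
proof (intro conjI allI impI)
  show "pideal f = pideal [:of_int n:]"
    if "f \<in> IntZ \<and> n \<noteq> 0 \<and> int_part (pideal f) = {k. n dvd k}" for f and n :: int
    using that pideal_eq_const_if_int_part_eq by blast
  show "int_part (pideal [:of_int n:]) = {k. n dvd k}" for n :: int
    by (rule int_part_pideal_const)
  show "pideal [:of_int n1:] = pideal [:of_int n2:] \<longleftrightarrow> n1 = n2 \<or> n1 = - n2" for n1 n2 :: int
    by (rule pideal_const_eq_iff)
qed

end
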